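(* Let $(X,\mathrm{dist})$ be a metric space and $\Sigma$ a compact metric space. Let $T(h):\Sigma\to\Sigma$, $h\ge0$, be a semigroup with $T(h)\Sigma=\Sigma$ for all $h\ge0$, and let $\{U_\sigma(t,\tau)\}_{\sigma\in\Sigma}$ be a family of processes on $X$ satisfying the translation property $U_\sigma(h+t,h+\tau)=U_{T(h)\sigma}(t,\tau)$ for all $\sigma\in\Sigma$, $h\ge0$, $t\ge\tau$. Assume the family is uniformly asymptotically compact, and let $A_\Sigma$ be its uniform global attractor. Let $S(h)(x,\sigma)=(U_\sigma(h,0)x,T(h)\sigma)$, $h\ge0$, be the skew-product semigroup on $\boldsymbol{X}=X\times\Sigma$. Then $S(h)$ has a (unique) global attractor $\boldsymbol{A}$, and $\Pi_1\boldsymbol{A}=A_\Sigma$, $\Pi_2\boldsymbol{A}=\Sigma$, where $\Pi_1,\Pi_2$ are the canonical projections of $\boldsymbol{X}$ onto $X$ and $\Sigma$.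
   Context: A process on $X$ is a family of maps $U(t,\tau):X\to X$, indexed by reals $t\ge\tau$, with $U(\tau,\tau)=\mathrm{id}_X$ and $U(t,\tau)=U(t,s)U(s,\tau)$ for $t\ge s\ge\tau$; no continuity is assumed. For nonempty subsets $B,C$ of a metric space $Y$, $\delta_Y(B,C)=\sup_{x\in B}\inf_{\xi\in C}\mathrm{dist}_Y(x,\xi)$. A set $K\subset X$ is uniformly attracting for the family if for every bounded $C\subset X$, $\lim_{t-\tau\to\infty}\sup_{\sigma\in\Sigma}\delta_X(U_\sigma(t,\tau)C,K)=0$. The family is uniformly asymptotically compact if there exists a compact uniformly attracting set; its uniform global attractor $A_\Sigma$ is the compact uniformly attracting set contained in every compact uniformly attracting set (it exists under uniform asymptotic compactness). $\boldsymbol{X}=X\times\Sigma$ carries the product metric. For a semigroup $V(h)$, $h\ge0$, on a metric space $Y$ (no continuity assumed), a set $K\subset Y$ is attracting if $\lim_{h\to\infty}\delta_Y(V(h)C,K)=0$ for every bounded $C\subset Y$; the global attractor of $V(h)$ is the smallest compact attracting set (i.e. a compact attracting set contained in every compact attracting set). *)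

theory Defs
  imports "HOL-Analysis.Analysis"
begin

text \<open>Hausdorff semidistance delta(B,C) = sup over x in B of inf over xi in C of dist x xi,
  taken in the extended reals so that inf over the empty set is +infinity and
  unbounded suprema are +infinity.\<close>
definition hsemidist :: "'a::metric_space set \<Rightarrow> 'a set \<Rightarrow> ereal" where
  "hsemidist B C = (SUP x\<in>B. INF \<xi>\<in>C. ereal (dist x \<xi>))"

definition is_process :: "(real \<Rightarrow> real \<Rightarrow> 'a \<Rightarrow> 'a) \<Rightarrow> bool" where
  "is_process U \<longleftrightarrow> (\<forall>\<tau>. U \<tau> \<tau> = id) \<and>
     (\<forall>t s \<tau>. \<tau> \<le> s \<and> s \<le> t \<longrightarrow> U t \<tau> = U t s \<circ> U s \<tau>)"

definition is_semigroup_on :: "'b set \<Rightarrow> (real \<Rightarrow> 'b \<Rightarrow> 'b) \<Rightarrow> bool" where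
  "is_semigroup_on Sig T \<longleftrightarrow> (\<forall>h\<ge>0. T h ` Sig \<subseteq> Sig) \<and> (\<forall>\<sigma>\<in>Sig. T 0 \<sigma> = \<sigma>) \<and>
     (\<forall>h\<ge>0. \<forall>k\<ge>0. \<forall>\<sigma>\<in>Sig. T (h + k) \<sigma> = T h (T k \<sigma>))"

definition unif_attracting ::
  "'b set \<Rightarrow> ('b \<Rightarrow> real \<Rightarrow> real \<Rightarrow> 'a::metric_space \<Rightarrow> 'a) \<Rightarrow> 'a set \<Rightarrow> bool" where
  "unif_attracting Sig U K \<longleftrightarrow>
     (\<forall>C. bounded C \<and> C \<noteq> {} \<longrightarrow>
        (\<forall>e>0. \<exists>L. \<forall>t \<tau>. \<tau> \<le> t \<and> L \<le> t - \<tau> \<longrightarrow>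
           \<bar>(SUP \<sigma>\<in>Sig. hsemidist (U \<sigma> t \<tau> ` C) K)\<bar> < ereal e))"

definition unif_asymp_compact ::
  "'b set \<Rightarrow> ('b \<Rightarrow> real \<Rightarrow> real \<Rightarrow> 'a::metric_space \<Rightarrow> 'a) \<Rightarrow> bool" where
  "unif_asymp_compact Sig U \<longleftrightarrow> (\<exists>K. compact K \<and> unif_attracting Sig U K)"

definition unif_global_attractor ::
  "'b set \<Rightarrow> ('b \<Rightarrow> real \<Rightarrow> real \<Rightarrow> 'a::metric_space \<Rightarrow> 'a) \<Rightarrow> 'a set \<Rightarrow> bool" where
  "unif_global_attractor Sig U A \<longleftrightarrow> compact A \<and> unif_attracting Sig U A \<and>
     (\<forall>K. compact K \<and> unif_attracting Sig U K \<longrightarrow> A \<subseteq> K)"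

definition sg_attracting :: "'c::metric_space set \<Rightarrow> (real \<Rightarrow> 'c \<Rightarrow> 'c) \<Rightarrow> 'c set \<Rightarrow> bool" where
  "sg_attracting Y V K \<longleftrightarrow>
     (\<forall>C. C \<subseteq> Y \<and> bounded C \<and> C \<noteq> {} \<longrightarrow>
        (\<forall>e>0. \<exists>L. \<forall>h. h \<ge> 0 \<and> L \<le> h \<longrightarrow> \<bar>hsemidist (V h ` C) K\<bar> < ereal e))"

definition sg_global_attractor :: "'c::metric_space set \<Rightarrow> (real \<Rightarrow> 'c \<Rightarrow> 'c) \<Rightarrow> 'c set \<Rightarrow> bool" where
  "sg_global_attractor Y V A \<longleftrightarrow> A \<subseteq> Y \<and> compact A \<and> sg_attracting Y V A \<and>
     (\<forall>K. K \<subseteq> Y \<and> compact K \<and> sg_attracting Y V K \<longrightarrow> A \<subseteq> K)"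

definition skew_product ::
  "('b \<Rightarrow> real \<Rightarrow> real \<Rightarrow> 'a \<Rightarrow> 'a) \<Rightarrow> (real \<Rightarrow> 'b \<Rightarrow> 'b) \<Rightarrow> real \<Rightarrow> 'a \<times> 'b \<Rightarrow> 'a \<times> 'b" where
  "skew_product U T h = (\<lambda>(x, \<sigma>). (U \<sigma> h 0 x, T h \<sigma>))"

end

theory Submission
  imports Defs
begin

(* The product A \<times> Sig is a compact attracting set of the skew-product
   semigroup S(h): U_\<sigma>(h,0) carries bounded sets uniformly close to A, and T(h) maps Sig into
   itself.  A semigroup with a compact attracting set K has a global attractor even without any
   continuity: the closure of the union of the omega-limit sets of bounded sets, since by
   sequential compactness of K the omega-limit set of C already attracts C.
   Let AA be a global attractor; then AA \<subseteq> A \<times> Sig.  By the translation identity and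
   surjectivity of T(h), every U_\<sigma>(t,\<tau>) equals some U_\<sigma>'(t-\<tau>,0), so attraction of C \<times> Sig
   under S makes the compact set fst ` AA uniformly attracting, whence A \<subseteq> fst ` AA.  Writing
   \<sigma> = T(h) \<sigma>' for large h shows that snd ` AA is dense in Sig, and it is compact. *)

lemma convergent_subseq_near_compact:
  fixes y :: "nat \<Rightarrow> 'a::metric_space"
  assumes "compact K" and near: "\<And>n. \<exists>\<xi>\<in>K. dist (y n) \<xi> < inverse (Suc n)"
  obtains l r where "l \<in> K" "strict_mono r" "(y \<circ> r) \<longlonglongrightarrow> l"
proof -
  obtain x where x: "\<And>n. x n \<in> K" "\<And>n. dist (y n) (x n) < inverse (Suc n)"
    using near by metis
  obtain l r where "l \<in> K" "strict_mono r" and lim: "(x \<circ> r) \<longlonglongrightarrow> l"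
    using compact_imp_seq_compact[OF \<open>compact K\<close>] x(1) by (metis seq_compactE)
  have "(y \<circ> r) \<longlonglongrightarrow> l"
  proof (rule tendstoI)
    fix e :: real assume "e > 0"
    have "(\<lambda>n. inverse (real (Suc (r n)))) \<longlonglongrightarrow> 0"
      using LIMSEQ_subseq_LIMSEQ[OF LIMSEQ_inverse_real_of_nat \<open>strict_mono r\<close>]
      by (simp add: comp_def)
    then have "\<forall>\<^sub>F n in sequentially. inverse (real (Suc (r n))) < e / 2"
      using \<open>e > 0\<close> by (intro order_tendstoD(2)) auto
    moreover have "\<forall>\<^sub>F n in sequentially. dist (x (r n)) l < e / 2"
      using tendstoD[OF lim, of "e / 2"] \<open>e > 0\<close> by (simp add: comp_def)
    ultimately show "\<forall>\<^sub>F n in sequentially. dist ((y \<circ> r) n) l < e"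
    proof eventually_elim
      case (elim n)
      then show ?case
        using x(2)[of "r n"] dist_triangle[of "y (r n)" l "x (r n)"] by simp
    qed
  qed
  with \<open>l \<in> K\<close> \<open>strict_mono r\<close> show ?thesis
    using that by blast
qed

lemma abs_hsemidist_lessD:
  assumes "\<bar>hsemidist B K\<bar> < ereal e" "b \<in> B"
  shows "\<exists>\<xi>\<in>K. dist b \<xi> < e"
proof -
  have "(INF \<xi>\<in>K. ereal (dist b \<xi>)) \<le> hsemidist B K"
    unfolding hsemidist_def using \<open>b \<in> B\<close> by (rule SUP_upper)
  also have "\<dots> \<le> \<bar>hsemidist B K\<bar>"
    by (cases "hsemidist B K") auto
  finally have "(INF \<xi>\<in>K. ereal (dist b \<xi>)) < ereal e"
    using assms(1) by (rule order.strict_trans1)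
  then show ?thesis
    by (simp add: INF_less_iff)
qed

lemma abs_hsemidist_lessI:
  assumes "B \<noteq> {}" "\<And>b. b \<in> B \<Longrightarrow> \<exists>\<xi>\<in>K. dist b \<xi> < d" "d < e"
  shows "\<bar>hsemidist B K\<bar> < ereal e"
proof -
  obtain b where "b \<in> B"
    using \<open>B \<noteq> {}\<close> by blast
  have "0 \<le> (INF \<xi>\<in>K. ereal (dist b \<xi>))"
    by (rule INF_greatest) simp
  also have "\<dots> \<le> hsemidist B K"
    unfolding hsemidist_def using \<open>b \<in> B\<close> by (rule SUP_upper)
  finally have "0 \<le> hsemidist B K" .
  moreover have "hsemidist B K \<le> ereal d"
    unfolding hsemidist_def
  proof (rule SUP_least)
    fix b assume "b \<in> B"
    with assms(2) obtain \<xi> where "\<xi> \<in> K" "dist b \<xi> < d"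
      by blast
    then show "(INF \<xi>\<in>K. ereal (dist b \<xi>)) \<le> ereal d"
      by (intro INF_lower2) auto
  qed
  ultimately show ?thesis
    using \<open>d < e\<close> by (cases "hsemidist B K") auto
qed

definition sg_attracts :: "(real \<Rightarrow> 'c::metric_space \<Rightarrow> 'c) \<Rightarrow> 'c set \<Rightarrow> 'c set \<Rightarrow> bool" where
  "sg_attracts V K C \<longleftrightarrow> (\<forall>e>0. \<forall>\<^sub>F h in at_top. \<forall>c\<in>C. \<exists>\<xi>\<in>K. dist (V h c) \<xi> < e)"

lemma sg_attractsD:
  assumes "sg_attracts V K C" "e > 0"
  obtains L where "\<forall>h\<ge>L. \<forall>c\<in>C. \<exists>\<xi>\<in>K. dist (V h c) \<xi> < e"
  using assms unfolding sg_attracts_def eventually_at_top_linorder by blast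

lemma sg_attracts_mono: "sg_attracts V K C \<Longrightarrow> K \<subseteq> K' \<Longrightarrow> sg_attracts V K' C"
  unfolding sg_attracts_def by (fast elim: eventually_mono)

lemma sg_attracting_iff:
  "sg_attracting Y V K \<longleftrightarrow> (\<forall>C. C \<subseteq> Y \<longrightarrow> bounded C \<longrightarrow> C \<noteq> {} \<longrightarrow> sg_attracts V K C)"
proof -
  have "(\<forall>e>0. \<exists>L. \<forall>h. h \<ge> 0 \<and> L \<le> h \<longrightarrow> \<bar>hsemidist (V h ` C) K\<bar> < ereal e)
    \<longleftrightarrow> sg_attracts V K C" if "C \<noteq> {}" for C
  proof
    assume hsd: "\<forall>e>0. \<exists>L. \<forall>h. h \<ge> 0 \<and> L \<le> h \<longrightarrow> \<bar>hsemidist (V h ` C) K\<bar> < ereal e"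
    show "sg_attracts V K C"
      unfolding sg_attracts_def eventually_at_top_linorder
    proof (intro allI impI)
      fix e :: real assume "e > 0"
      with hsd obtain L where "\<forall>h. h \<ge> 0 \<and> L \<le> h \<longrightarrow> \<bar>hsemidist (V h ` C) K\<bar> < ereal e"
        by blast
      then have "\<forall>h\<ge>max L 0. \<forall>c\<in>C. \<exists>\<xi>\<in>K. dist (V h c) \<xi> < e"
        by (auto intro: abs_hsemidist_lessD)
      then show "\<exists>N. \<forall>h\<ge>N. \<forall>c\<in>C. \<exists>\<xi>\<in>K. dist (V h c) \<xi> < e" ..
    qed
  next
    assume "sg_attracts V K C"
    show "\<forall>e>0. \<exists>L. \<forall>h. h \<ge> 0 \<and> L \<le> h \<longrightarrow> \<bar>hsemidist (V h ` C) K\<bar> < ereal e"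
    proof (intro allI impI)
      fix e :: real assume "e > 0"
      then obtain L where L: "\<forall>h\<ge>L. \<forall>c\<in>C. \<exists>\<xi>\<in>K. dist (V h c) \<xi> < e / 2"
        using sg_attractsD[OF \<open>sg_attracts V K C\<close>, of "e / 2"] by auto
      show "\<exists>L. \<forall>h. h \<ge> 0 \<and> L \<le> h \<longrightarrow> \<bar>hsemidist (V h ` C) K\<bar> < ereal e"
      proof (intro exI[of _ L] allI impI)
        fix h assume "h \<ge> 0 \<and> L \<le> h"
        then show "\<bar>hsemidist (V h ` C) K\<bar> < ereal e"
          using L \<open>C \<noteq> {}\<close> \<open>e > 0\<close> by (intro abs_hsemidist_lessI[of _ _ "e / 2"]) auto
      qed
    qed
  qed
  then show ?thesis
    by (auto simp: sg_attracting_def)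
qed

definition omega_limit :: "(real \<Rightarrow> 'c::metric_space \<Rightarrow> 'c) \<Rightarrow> 'c set \<Rightarrow> 'c set" where
  "omega_limit V C = {l. \<exists>h c. filterlim h at_top sequentially \<and> (\<forall>n. c n \<in> C) \<and>
      (\<lambda>n. V (h n) (c n)) \<longlonglongrightarrow> l}"

lemma omega_limit_subset:
  assumes "sg_attracts V K C" "closed K"
  shows "omega_limit V C \<subseteq> K"
proof
  fix l assume "l \<in> omega_limit V C"
  then obtain h c where h: "filterlim h at_top sequentially" and c: "\<And>n. c n \<in> C"
    and lim: "(\<lambda>n. V (h n) (c n)) \<longlonglongrightarrow> l"
    unfolding omega_limit_def by blast
  have "l \<in> closure K"
    unfolding closure_approachable
  proof (intro allI impI)
    fix e :: real assume "e > 0"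
    then have "\<forall>\<^sub>F h in at_top. \<forall>c\<in>C. \<exists>\<xi>\<in>K. dist (V h c) \<xi> < e / 2"
      using assms(1) unfolding sg_attracts_def by (meson half_gt_zero)
    then have "\<forall>\<^sub>F n in sequentially. \<exists>\<xi>\<in>K. dist (V (h n) (c n)) \<xi> < e / 2"
      using filterlim_iff[THEN iffD1, OF h] c by (fast elim: eventually_mono)
    moreover have "\<forall>\<^sub>F n in sequentially. dist (V (h n) (c n)) l < e / 2"
      using tendstoD[OF lim, of "e / 2"] \<open>e > 0\<close> by simp
    ultimately obtain n where
      "(\<exists>\<xi>\<in>K. dist (V (h n) (c n)) \<xi> < e / 2) \<and> dist (V (h n) (c n)) l < e / 2"
      using eventually_happens'[OF sequentially_bot eventually_conj] by blast
    then show "\<exists>\<xi>\<in>K. dist \<xi> l < e"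
      using dist_triangle_half_r by blast
  qed
  then show "l \<in> K"
    using \<open>closed K\<close> by simp
qed

lemma sg_attracts_omega_limit:
  assumes attr: "sg_attracts V K C" and "compact K"
  shows "sg_attracts V (omega_limit V C) C"
  unfolding sg_attracts_def
proof (rule ccontr)
  assume "\<not> (\<forall>e>0. \<forall>\<^sub>F h in at_top. \<forall>c\<in>C. \<exists>\<xi>\<in>omega_limit V C. dist (V h c) \<xi> < e)"
  then obtain e where "e > 0"
    and far: "\<exists>\<^sub>F h in at_top. \<exists>c\<in>C. \<forall>\<xi>\<in>omega_limit V C. e \<le> dist (V h c) \<xi>"
    by (auto simp: not_eventually not_less)
  have "\<exists>h c. real n \<le> h \<and> c \<in> C \<and> (\<forall>\<xi>\<in>omega_limit V C. e \<le> dist (V h c) \<xi>) \<and>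
      (\<exists>\<xi>\<in>K. dist (V h c) \<xi> < inverse (Suc n))" for n
  proof -
    have "\<forall>\<^sub>F h in at_top. real n \<le> h \<and> (\<forall>c\<in>C. \<exists>\<xi>\<in>K. dist (V h c) \<xi> < inverse (Suc n))"
      using attr unfolding sg_attracts_def by (simp add: eventually_conj eventually_ge_at_top)
    from frequently_ex[OF frequently_eventually_conj[OF far this]] show ?thesis
      by blast
  qed
  then obtain h c where h: "\<And>n. real n \<le> h n" and c: "\<And>n. c n \<in> C"
    and far_n: "\<And>n. \<forall>\<xi>\<in>omega_limit V C. e \<le> dist (V (h n) (c n)) \<xi>"
    and near_n: "\<And>n. \<exists>\<xi>\<in>K. dist (V (h n) (c n)) \<xi> < inverse (Suc n)"
    by metis
  obtain l r where "strict_mono r" and lim: "((\<lambda>n. V (h n) (c n)) \<circ> r) \<longlonglongrightarrow> l"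
    using convergent_subseq_near_compact[OF \<open>compact K\<close> near_n] by blast
  have "filterlim h at_top sequentially"
    using filterlim_at_top_mono[OF filterlim_real_sequentially] h by simp
  then have "filterlim (h \<circ> r) at_top sequentially"
    using filterlim_compose filterlim_subseq[OF \<open>strict_mono r\<close>] unfolding comp_def by blast
  then have "l \<in> omega_limit V C"
    unfolding omega_limit_def mem_Collect_eq using c lim
    by (intro exI[of _ "h \<circ> r"] exI[of _ "c \<circ> r"]) (auto simp: comp_def)
  then have "\<forall>n. e \<le> dist (V (h (r n)) (c (r n))) l"
    using far_n by blast
  moreover have "\<forall>\<^sub>F n in sequentially. dist (V (h (r n)) (c (r n))) l < e"
    using tendstoD[OF lim \<open>e > 0\<close>] by (simp add: comp_def)
  ultimately show False
    by (auto dest: eventually_happens' simp: not_less[symmetric])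
qed

lemma sg_global_attractor_exists:
  assumes "K \<subseteq> Y" "compact K" "sg_attracting Y V K"
  obtains AA where "sg_global_attractor Y V AA"
proof
  define AA where "AA = closure (\<Union>C\<in>{C. C \<subseteq> Y \<and> bounded C \<and> C \<noteq> {}}. omega_limit V C)"
  have least: "AA \<subseteq> K'" if "closed K'" "sg_attracting Y V K'" for K'
    unfolding AA_def
  proof (intro closure_minimal UN_least \<open>closed K'\<close>)
    fix C assume "C \<in> {C. C \<subseteq> Y \<and> bounded C \<and> C \<noteq> {}}"
    then show "omega_limit V C \<subseteq> K'"
      using that(2) by (intro omega_limit_subset[OF _ \<open>closed K'\<close>]) (simp add: sg_attracting_iff)
  qed
  then have "AA \<subseteq> K"
    using assms(2,3) compact_imp_closed by blast
  then have "compact AA"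
    using compact_Int_closed[OF \<open>compact K\<close>, of AA] unfolding AA_def
    by (simp add: Int_absorb1)
  moreover have "sg_attracting Y V AA"
    unfolding sg_attracting_iff
  proof (intro allI impI)
    fix C assume C: "C \<subseteq> Y" "bounded C" "C \<noteq> {}"
    then have "omega_limit V C \<subseteq> AA"
      unfolding AA_def by (intro subset_trans[OF _ closure_subset]) (use C in blast)
    moreover have "sg_attracts V (omega_limit V C) C"
      using assms(2,3) C by (intro sg_attracts_omega_limit[of _ K]) (simp_all add: sg_attracting_iff)
    ultimately show "sg_attracts V AA C"
      using sg_attracts_mono by blast
  qed
  ultimately show "sg_global_attractor Y V AA"
    unfolding sg_global_attractor_def using \<open>AA \<subseteq> K\<close> assms(1) least compact_imp_closed
    by blast
qed

lemma sg_global_attractor_unique: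
  "sg_global_attractor Y V AA \<Longrightarrow> sg_global_attractor Y V AA' \<Longrightarrow> AA = AA'"
  unfolding sg_global_attractor_def by (meson subset_antisym)

lemma unif_attracting_UNION_iff:
  fixes U :: "'s \<Rightarrow> real \<Rightarrow> real \<Rightarrow> 'a::metric_space \<Rightarrow> 'a"
  shows "unif_attracting Sig U K \<longleftrightarrow> (\<forall>C. bounded C \<and> C \<noteq> {} \<longrightarrow> (\<forall>e>0. \<exists>L. \<forall>t \<tau>.
     \<tau> \<le> t \<and> L \<le> t - \<tau> \<longrightarrow> \<bar>hsemidist (\<Union>\<sigma>\<in>Sig. U \<sigma> t \<tau> ` C) K\<bar> < ereal e))"
  by (simp add: unif_attracting_def hsemidist_def SUP_UNION)

text \<open>A supremum over the empty index set is \<open>-\<infinity>\<close>, whose absolute value is \<open>\<infinity>\<close>.\<close>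

lemma unif_attracting_nonempty:
  fixes U :: "'s \<Rightarrow> real \<Rightarrow> real \<Rightarrow> 'a::metric_space \<Rightarrow> 'a"
  assumes "unif_attracting Sig U K"
  shows "Sig \<noteq> {}"
proof
  assume "Sig = {}"
  obtain L where "\<forall>t \<tau>. \<tau> \<le> t \<and> L \<le> t - \<tau> \<longrightarrow> \<bar>hsemidist (\<Union>\<sigma>\<in>Sig. U \<sigma> t \<tau> ` {x}) K\<bar> < ereal 1"
    using assms[unfolded unif_attracting_UNION_iff, rule_format, of "{x}" 1] by auto
  from this[rule_format, of 0 "max L 0"] \<open>Sig = {}\<close> show False
    by (simp add: hsemidist_def bot_ereal_def)
qed

lemma unif_attractingD:
  fixes U :: "'s \<Rightarrow> real \<Rightarrow> real \<Rightarrow> 'a::metric_space \<Rightarrow> 'a"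
  assumes "unif_attracting Sig U K" "bounded C" "C \<noteq> {}" "e > 0"
  obtains L where "\<forall>t \<tau>. \<tau> \<le> t \<and> L \<le> t - \<tau> \<longrightarrow> (\<forall>\<sigma>\<in>Sig. \<forall>c\<in>C. \<exists>\<xi>\<in>K. dist (U \<sigma> t \<tau> c) \<xi> < e)"
proof -
  obtain L where "\<forall>t \<tau>. \<tau> \<le> t \<and> L \<le> t - \<tau> \<longrightarrow> \<bar>hsemidist (\<Union>\<sigma>\<in>Sig. U \<sigma> t \<tau> ` C) K\<bar> < ereal e"
    using assms unfolding unif_attracting_UNION_iff by blast
  then show thesis
    by (intro that[of L]) (auto intro: abs_hsemidist_lessD)
qed

lemma unif_attractingI:
  fixes U :: "'s \<Rightarrow> real \<Rightarrow> real \<Rightarrow> 'a::metric_space \<Rightarrow> 'a"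
  assumes "Sig \<noteq> {}"
    and near: "\<And>C e. bounded C \<Longrightarrow> C \<noteq> {} \<Longrightarrow> e > 0 \<Longrightarrow> \<exists>L. \<forall>t \<tau>. \<tau> \<le> t \<and> L \<le> t - \<tau> \<longrightarrow>
      (\<forall>\<sigma>\<in>Sig. \<forall>c\<in>C. \<exists>\<xi>\<in>K. dist (U \<sigma> t \<tau> c) \<xi> < e)"
  shows "unif_attracting Sig U K"
  unfolding unif_attracting_UNION_iff
proof (intro allI impI)
  fix C :: "'a set" and e :: real assume "bounded C \<and> C \<noteq> {}" "e > 0"
  then obtain L where L: "\<forall>t \<tau>. \<tau> \<le> t \<and> L \<le> t - \<tau> \<longrightarrow>
      (\<forall>\<sigma>\<in>Sig. \<forall>c\<in>C. \<exists>\<xi>\<in>K. dist (U \<sigma> t \<tau> c) \<xi> < e / 2)"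
    using near[of C "e / 2"] by auto
  show "\<exists>L. \<forall>t \<tau>. \<tau> \<le> t \<and> L \<le> t - \<tau> \<longrightarrow> \<bar>hsemidist (\<Union>\<sigma>\<in>Sig. U \<sigma> t \<tau> ` C) K\<bar> < ereal e"
  proof (intro exI[of _ L] allI impI)
    fix t \<tau> assume "\<tau> \<le> t \<and> L \<le> t - \<tau>"
    then show "\<bar>hsemidist (\<Union>\<sigma>\<in>Sig. U \<sigma> t \<tau> ` C) K\<bar> < ereal e"
      using L \<open>Sig \<noteq> {}\<close> \<open>bounded C \<and> C \<noteq> {}\<close> \<open>e > 0\<close>
      by (intro abs_hsemidist_lessI[of _ _ "e / 2"]) auto
  qed
qed

lemma process_shift_to_zero:
  fixes T :: "real \<Rightarrow> 's \<Rightarrow> 's" and U :: "'s \<Rightarrow> real \<Rightarrow> real \<Rightarrow> 'a \<Rightarrow> 'a"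
  assumes onto: "\<forall>h\<ge>0. T h ` Sig = Sig"
    and translation: "\<forall>\<sigma>\<in>Sig. \<forall>h\<ge>0. \<forall>t \<tau>. \<tau> \<le> t \<longrightarrow> U \<sigma> (h + t) (h + \<tau>) = U (T h \<sigma>) t \<tau>"
    and "\<sigma> \<in> Sig" "\<tau> \<le> t"
  obtains \<sigma>' where "\<sigma>' \<in> Sig" "U \<sigma> t \<tau> = U \<sigma>' (t - \<tau>) 0"
proof (cases "0 \<le> \<tau>")
  case True
  then have "U \<sigma> t \<tau> = U (T \<tau> \<sigma>) (t - \<tau>) 0"
    using translation[rule_format, of \<sigma> \<tau> 0 "t - \<tau>"] \<open>\<sigma> \<in> Sig\<close> \<open>\<tau> \<le> t\<close> by auto
  moreover have "T \<tau> \<sigma> \<in> Sig"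
    using onto True \<open>\<sigma> \<in> Sig\<close> by blast
  ultimately show ?thesis
    using that by simp
next
  case False
  then obtain \<sigma>' where "\<sigma>' \<in> Sig" "\<sigma> = T (- \<tau>) \<sigma>'"
    using onto \<open>\<sigma> \<in> Sig\<close> by (metis imageE neg_0_le_iff_le nle_le)
  moreover from this False have "U \<sigma>' (t - \<tau>) 0 = U \<sigma> t \<tau>"
    using translation[rule_format, of \<sigma>' "- \<tau>" \<tau> t] \<open>\<tau> \<le> t\<close> by auto
  ultimately show ?thesis
    using that by simp
qed

lemma sg_attracting_Times_of_unif_attracting:
  fixes Sig :: "'b::metric_space set" and U :: "'b \<Rightarrow> real \<Rightarrow> real \<Rightarrow> 'a::metric_space \<Rightarrow> 'a"
  assumes "\<forall>h\<ge>0. T h ` Sig \<subseteq> Sig" and "unif_attracting Sig U K"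
  shows "sg_attracting (UNIV \<times> Sig) (skew_product U T) (K \<times> Sig)"
  unfolding sg_attracting_iff sg_attracts_def
proof (intro allI impI)
  fix D :: "('a \<times> 'b) set" and e :: real
  assume D: "D \<subseteq> UNIV \<times> Sig" "bounded D" "D \<noteq> {}" and "e > 0"
  then have "bounded (fst ` D)" "fst ` D \<noteq> {}"
    by (simp_all add: bounded_fst)
  then obtain L where L: "\<forall>t \<tau>. \<tau> \<le> t \<and> L \<le> t - \<tau> \<longrightarrow>
      (\<forall>\<sigma>\<in>Sig. \<forall>x\<in>fst ` D. \<exists>\<xi>\<in>K. dist (U \<sigma> t \<tau> x) \<xi> < e)"
    by (rule unif_attractingD[OF assms(2) _ _ \<open>e > 0\<close>])
  show "\<forall>\<^sub>F h in at_top. \<forall>p\<in>D. \<exists>q\<in>K \<times> Sig. dist (skew_product U T h p) q < e"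
  proof (rule eventually_at_top_linorderI[of "max L 0"], intro ballI)
    fix h p assume "max L 0 \<le> h" "p \<in> D"
    obtain x \<sigma> where p: "p = (x, \<sigma>)"
      by (cases p)
    with \<open>p \<in> D\<close> D(1) have "\<sigma> \<in> Sig" "x \<in> fst ` D"
      by (auto simp: rev_image_eqI)
    then obtain \<xi> where "\<xi> \<in> K" "dist (U \<sigma> h 0 x) \<xi> < e"
      using L[rule_format, of 0 h \<sigma> x] \<open>max L 0 \<le> h\<close> by auto
    moreover have "(\<xi>, T h \<sigma>) \<in> K \<times> Sig"
      using assms(1) \<open>max L 0 \<le> h\<close> \<open>\<sigma> \<in> Sig\<close> \<open>\<xi> \<in> K\<close> by auto
    moreover have "dist (skew_product U T h p) (\<xi>, T h \<sigma>) = dist (U \<sigma> h 0 x) \<xi>"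
      by (simp add: p skew_product_def dist_Pair_Pair)
    ultimately show "\<exists>q\<in>K \<times> Sig. dist (skew_product U T h p) q < e"
      by (metis (no_types, lifting))
  qed
qed

lemma unif_attracting_fst_of_sg_attracting:
  fixes Sig :: "'b::metric_space set" and U :: "'b \<Rightarrow> real \<Rightarrow> real \<Rightarrow> 'a::metric_space \<Rightarrow> 'a"
  assumes onto: "\<forall>h\<ge>0. T h ` Sig = Sig"
    and translation: "\<forall>\<sigma>\<in>Sig. \<forall>h\<ge>0. \<forall>t \<tau>. \<tau> \<le> t \<longrightarrow> U \<sigma> (h + t) (h + \<tau>) = U (T h \<sigma>) t \<tau>"
    and "Sig \<noteq> {}" "bounded Sig"
    and attr: "sg_attracting (UNIV \<times> Sig) (skew_product U T) K"
  shows "unif_attracting Sig U (fst ` K)"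
proof (rule unif_attractingI[OF \<open>Sig \<noteq> {}\<close>])
  fix C :: "'a set" and e :: real assume "bounded C" "C \<noteq> {}" "e > 0"
  then have "C \<times> Sig \<subseteq> UNIV \<times> Sig" "bounded (C \<times> Sig)" "C \<times> Sig \<noteq> {}"
    using \<open>Sig \<noteq> {}\<close> \<open>bounded Sig\<close> by (auto simp: bounded_Times)
  from attr[unfolded sg_attracting_iff, rule_format, OF this]
  obtain L where L: "\<forall>h\<ge>L. \<forall>p\<in>C \<times> Sig. \<exists>q\<in>K. dist (skew_product U T h p) q < e"
    using sg_attractsD \<open>e > 0\<close> by metis
  show "\<exists>L. \<forall>t \<tau>. \<tau> \<le> t \<and> L \<le> t - \<tau> \<longrightarrow> (\<forall>\<sigma>\<in>Sig. \<forall>c\<in>C. \<exists>\<xi>\<in>fst ` K. dist (U \<sigma> t \<tau> c) \<xi> < e)"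
  proof (intro exI[of _ L] allI impI ballI)
    fix t \<tau> \<sigma> c assume late: "\<tau> \<le> t \<and> L \<le> t - \<tau>" and "\<sigma> \<in> Sig" "c \<in> C"
    then have "\<tau> \<le> t"
      by simp
    obtain \<sigma>' where "\<sigma>' \<in> Sig" and shift: "U \<sigma> t \<tau> = U \<sigma>' (t - \<tau>) 0"
      by (rule process_shift_to_zero[OF onto translation \<open>\<sigma> \<in> Sig\<close> \<open>\<tau> \<le> t\<close>])
    then obtain q where "q \<in> K" and q: "dist (skew_product U T (t - \<tau>) (c, \<sigma>')) q < e"
      using L[rule_format, of "t - \<tau>" "(c, \<sigma>')"] late \<open>c \<in> C\<close> by auto
    have "dist (U \<sigma> t \<tau> c) (fst q) \<le> dist (skew_product U T (t - \<tau>) (c, \<sigma>')) q"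
      using dist_fst_le[of "skew_product U T (t - \<tau>) (c, \<sigma>')" q] by (simp add: shift skew_product_def)
    with q \<open>q \<in> K\<close> show "\<exists>\<xi>\<in>fst ` K. dist (U \<sigma> t \<tau> c) \<xi> < e"
      by (intro bexI[of _ "fst q"]) auto
  qed
qed

lemma closure_snd_of_sg_attracting:
  fixes Sig :: "'b::metric_space set" and U :: "'b \<Rightarrow> real \<Rightarrow> real \<Rightarrow> 'a::metric_space \<Rightarrow> 'a"
  assumes onto: "\<forall>h\<ge>0. T h ` Sig = Sig" and "bounded Sig"
    and attr: "sg_attracting (UNIV \<times> Sig) (skew_product U T) K"
  shows "Sig \<subseteq> closure (snd ` K)"
proof
  fix \<sigma> assume "\<sigma> \<in> Sig"
  show "\<sigma> \<in> closure (snd ` K)"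
    unfolding closure_approachable
  proof (intro allI impI)
    fix e :: real assume "e > 0"
    fix x :: 'a
    have "{x} \<times> Sig \<subseteq> UNIV \<times> Sig" "bounded ({x} \<times> Sig)" "{x} \<times> Sig \<noteq> {}"
      using \<open>\<sigma> \<in> Sig\<close> \<open>bounded Sig\<close> by (auto simp: bounded_Times)
    from attr[unfolded sg_attracting_iff, rule_format, OF this]
    obtain L where L: "\<forall>h\<ge>L. \<forall>p\<in>{x} \<times> Sig. \<exists>q\<in>K. dist (skew_product U T h p) q < e"
      using sg_attractsD \<open>e > 0\<close> by metis
    obtain \<sigma>' where "\<sigma>' \<in> Sig" and \<sigma>: "\<sigma> = T (max L 0) \<sigma>'"
      using onto \<open>\<sigma> \<in> Sig\<close> by (metis imageE max.cobounded2)
    then obtain q where "q \<in> K" and q: "dist (skew_product U T (max L 0) (x, \<sigma>')) q < e"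
      using L[rule_format, of "max L 0" "(x, \<sigma>')"] by auto
    have "dist (snd q) \<sigma> \<le> dist (skew_product U T (max L 0) (x, \<sigma>')) q"
      using dist_snd_le[of "skew_product U T (max L 0) (x, \<sigma>')" q]
      by (simp add: \<sigma> skew_product_def dist_commute)
    with q \<open>q \<in> K\<close> show "\<exists>\<tau>\<in>snd ` K. dist \<tau> \<sigma> < e"
      by (intro bexI[of _ "snd q"]) auto
  qed
qed


lemma skew_product_attractor_projections:
  fixes Sig :: "'b::metric_space set" and U :: "'b \<Rightarrow> real \<Rightarrow> real \<Rightarrow> 'a::metric_space \<Rightarrow> 'a"
  assumes "compact Sig"
    and onto: "\<forall>h\<ge>0. T h ` Sig = Sig"
    and translation: "\<forall>\<sigma>\<in>Sig. \<forall>h\<ge>0. \<forall>t \<tau>. \<tau> \<le> t \<longrightarrow> U \<sigma> (h + t) (h + \<tau>) = U (T h \<sigma>) t \<tau>"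
    and "unif_global_attractor Sig U A"
    and "sg_global_attractor (UNIV \<times> Sig) (skew_product U T) AA"
  shows "fst ` AA = A \<and> snd ` AA = Sig"
proof -
  have "compact A" and A: "unif_attracting Sig U A"
    and A_least: "\<And>K. compact K \<Longrightarrow> unif_attracting Sig U K \<Longrightarrow> A \<subseteq> K"
    using assms(4) unfolding unif_global_attractor_def by auto
  have "Sig \<noteq> {}" "bounded Sig"
    using unif_attracting_nonempty[OF A] compact_imp_bounded[OF \<open>compact Sig\<close>] .
  from assms(5) have "compact AA" and attr: "sg_attracting (UNIV \<times> Sig) (skew_product U T) AA"
    unfolding sg_global_attractor_def by simp_all
  then have "compact (fst ` AA)" "compact (snd ` AA)"
    by (simp_all add: compact_continuous_image continuous_on_fst continuous_on_snd continuous_on_id)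
  have "A \<times> Sig \<subseteq> UNIV \<times> Sig" "compact (A \<times> Sig)"
    "sg_attracting (UNIV \<times> Sig) (skew_product U T) (A \<times> Sig)"
    using onto A \<open>compact A\<close> \<open>compact Sig\<close>
    by (auto intro: compact_Times sg_attracting_Times_of_unif_attracting)
  then have "AA \<subseteq> A \<times> Sig"
    using assms(5) unfolding sg_global_attractor_def by blast
  moreover have "A \<subseteq> fst ` AA"
    using attr onto translation \<open>Sig \<noteq> {}\<close> \<open>bounded Sig\<close> \<open>compact (fst ` AA)\<close>
    by (intro A_least unif_attracting_fst_of_sg_attracting)
  moreover have "Sig \<subseteq> snd ` AA"
    using closure_snd_of_sg_attracting[OF onto \<open>bounded Sig\<close> attr] \<open>compact (snd ` AA)\<close>
    by (simp add: compact_imp_closed closure_closed)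
  ultimately show ?thesis
    by auto
qed

theorem theorem4p3:
  fixes Sig :: "'b::metric_space set"
    and T :: "real \<Rightarrow> 'b \<Rightarrow> 'b"
    and U :: "'b \<Rightarrow> real \<Rightarrow> real \<Rightarrow> 'a::metric_space \<Rightarrow> 'a"
    and A :: "'a set"
  assumes "compact Sig"
    and "is_semigroup_on Sig T"
    and "\<forall>h\<ge>0. T h ` Sig = Sig"
    and "\<forall>\<sigma>\<in>Sig. is_process (U \<sigma>)"
    and "\<forall>\<sigma>\<in>Sig. \<forall>h\<ge>0. \<forall>t \<tau>. \<tau> \<le> t \<longrightarrow> U \<sigma> (h + t) (h + \<tau>) = U (T h \<sigma>) t \<tau>"
    and "unif_asymp_compact Sig U"
    and "unif_global_attractor Sig U A"
  shows "(\<exists>!AA. sg_global_attractor (UNIV \<times> Sig) (skew_product U T) AA) \<and>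
         (\<forall>AA. sg_global_attractor (UNIV \<times> Sig) (skew_product U T) AA \<longrightarrow>
                fst ` AA = A \<and> snd ` AA = Sig)"
proof -
  have "compact A" "unif_attracting Sig U A"
    using assms(7) unfolding unif_global_attractor_def by simp_all
  then have "A \<times> Sig \<subseteq> UNIV \<times> Sig" "compact (A \<times> Sig)"
    "sg_attracting (UNIV \<times> Sig) (skew_product U T) (A \<times> Sig)"
    using assms(1,3) by (auto intro: compact_Times sg_attracting_Times_of_unif_attracting)
  then obtain AA where AA: "sg_global_attractor (UNIV \<times> Sig) (skew_product U T) AA"
    by (rule sg_global_attractor_exists)
  then have "\<exists>!AA. sg_global_attractor (UNIV \<times> Sig) (skew_product U T) AA"
    by (rule ex1I) (erule sg_global_attractor_unique[OF _ AA])
  with skew_product_attractor_projections[OF assms(1,3,5,7)] show ?thesis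
    by blast
qed

end
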